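(* Let $\rho\ge1$. Any deterministic LOCAL algorithm has the following lower bound on its round complexity, where $\Omega$ hides an absolute constant, if it is guaranteed to output, on every $n$-vertex graph, a $\rho$-approximate maximum cardinality matching. Specifically, it must use $\Omega(\log^* n/\rho)$ rounds on some $n$-vertex ring (cycle) graph. In particular, this holds even when restricted to graphs of maximum degree 2.
   Context: **Approximate matchings.** A matching $M$ of a graph is a $\rho$-approximate maximum cardinality matching if $|M|\ge \tau/\rho$, where $\tau$ is the maximum size of a matching in the graph. **LOCAL model on graphs.** Computation proceeds in synchronous rounds: - Each vertex does unbounded local computation and exchanges unbounded messages with its neighbours. - Vertices have unique $O(\log n)$-bit IDs. - After $t$ rounds, each vertex outputs which of its incident edges are in the matching. *)

theory Defs
  imports Complex_Main
begin

definition log_star :: "nat \<Rightarrow> nat" where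
  "log_star n = (LEAST k. ((log 2) ^^ k) (real n) \<le> 1)"

definition simple_graph :: "nat \<Rightarrow> (nat \<Rightarrow> nat \<Rightarrow> bool) \<Rightarrow> bool" where
  "simple_graph n E \<longleftrightarrow> (\<forall>u v. E u v \<longrightarrow> u < n \<and> v < n \<and> u \<noteq> v \<and> E v u)"

definition nbrs :: "(nat \<Rightarrow> nat \<Rightarrow> bool) \<Rightarrow> nat \<Rightarrow> nat set" where
  "nbrs E v = {u. E v u}"

definition deg :: "(nat \<Rightarrow> nat \<Rightarrow> bool) \<Rightarrow> nat \<Rightarrow> nat" where
  "deg E v = card (nbrs E v)"

definition max_degree_le :: "nat \<Rightarrow> (nat \<Rightarrow> nat \<Rightarrow> bool) \<Rightarrow> nat \<Rightarrow> bool" where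
  "max_degree_le n E d \<longleftrightarrow> (\<forall>v<n. deg E v \<le> d)"

definition cycle_graph :: "nat \<Rightarrow> nat \<Rightarrow> nat \<Rightarrow> bool" where
  "cycle_graph n u v \<longleftrightarrow> u < n \<and> v < n \<and> u \<noteq> v \<and> (v = (u + 1) mod n \<or> u = (v + 1) mod n)"

definition graph_edges :: "nat \<Rightarrow> (nat \<Rightarrow> nat \<Rightarrow> bool) \<Rightarrow> nat set set" where
  "graph_edges n E = {{u, v} | u v. u < n \<and> v < n \<and> E u v}"

definition is_matching :: "nat \<Rightarrow> (nat \<Rightarrow> nat \<Rightarrow> bool) \<Rightarrow> nat set set \<Rightarrow> bool" where
  "is_matching n E M \<longleftrightarrow> M \<subseteq> graph_edges n E \<and> (\<forall>e\<in>M. \<forall>e'\<in>M. e \<noteq> e' \<longrightarrow> e \<inter> e' = {})"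

definition max_matching_size :: "nat \<Rightarrow> (nat \<Rightarrow> nat \<Rightarrow> bool) \<Rightarrow> nat" where
  "max_matching_size n E = Max (card ` {M. is_matching n E M})"

definition approx_matching :: "real \<Rightarrow> nat \<Rightarrow> (nat \<Rightarrow> nat \<Rightarrow> bool) \<Rightarrow> nat set set \<Rightarrow> bool" where
  "approx_matching \<rho> n E M \<longleftrightarrow> is_matching n E M \<and> real (card M) \<ge> real (max_matching_size n E) / \<rho>"

text \<open>Unique O(log n)-bit identifiers: injective, values below n^C.\<close>
definition valid_ids :: "nat \<Rightarrow> nat \<Rightarrow> (nat \<Rightarrow> nat) \<Rightarrow> bool" where
  "valid_ids C n idf \<longleftrightarrow> inj_on idf {..<n} \<and> (\<forall>v<n. idf v < n ^ C)"

definition valid_ports :: "nat \<Rightarrow> (nat \<Rightarrow> nat \<Rightarrow> bool) \<Rightarrow> (nat \<Rightarrow> nat \<Rightarrow> nat) \<Rightarrow> bool" where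
  "valid_ports n E port \<longleftrightarrow> (\<forall>v<n. bij_betw (port v) {..<deg E v} (nbrs E v))"

definition backport :: "(nat \<Rightarrow> nat \<Rightarrow> bool) \<Rightarrow> (nat \<Rightarrow> nat \<Rightarrow> nat) \<Rightarrow> nat \<Rightarrow> nat \<Rightarrow> nat" where
  "backport E port u v = (THE j. j < deg E u \<and> port u j = v)"

text \<open>States and messages are encoded as natural numbers (unbounded).
 init: initial state from own ID and degree;
 msg s i: message sent in the current round through port i when in state s;
 trans s r: new state, r i = Some (message received on port i) for i < degree;
 out s: set of ports whose incident edges are declared to be in the matching.\<close>
record local_alg =
  alg_init :: "nat \<Rightarrow> nat \<Rightarrow> nat"
  alg_msg :: "nat \<Rightarrow> nat \<Rightarrow> nat"
  alg_trans :: "nat \<Rightarrow> (nat \<Rightarrow> nat option) \<Rightarrow> nat"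
  alg_out :: "nat \<Rightarrow> nat set"

fun run :: "local_alg \<Rightarrow> (nat \<Rightarrow> nat \<Rightarrow> bool) \<Rightarrow> (nat \<Rightarrow> nat) \<Rightarrow> (nat \<Rightarrow> nat \<Rightarrow> nat)
             \<Rightarrow> nat \<Rightarrow> nat \<Rightarrow> nat" where
  "run A E idf port 0 v = alg_init A (idf v) (deg E v)"
| "run A E idf port (Suc r) v =
     alg_trans A (run A E idf port r v)
       (\<lambda>i. if i < deg E v
            then Some (alg_msg A (run A E idf port r (port v i)) (backport E port (port v i) v))
            else None)"

definition chosen_edges :: "local_alg \<Rightarrow> (nat \<Rightarrow> nat \<Rightarrow> bool) \<Rightarrow> (nat \<Rightarrow> nat) \<Rightarrow> (nat \<Rightarrow> nat \<Rightarrow> nat)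
             \<Rightarrow> nat \<Rightarrow> nat \<Rightarrow> nat set set" where
  "chosen_edges A E idf port r v = {{v, port v i} | i. i \<in> alg_out A (run A E idf port r v)}"

definition output_ok :: "real \<Rightarrow> nat \<Rightarrow> local_alg \<Rightarrow> (nat \<Rightarrow> nat \<Rightarrow> bool) \<Rightarrow> (nat \<Rightarrow> nat)
             \<Rightarrow> (nat \<Rightarrow> nat \<Rightarrow> nat) \<Rightarrow> nat \<Rightarrow> bool" where
  "output_ok \<rho> n A E idf port r \<longleftrightarrow>
     (\<forall>v<n. alg_out A (run A E idf port r v) \<subseteq> {..<deg E v}) \<and>
     (\<forall>u<n. \<forall>v<n. E u v \<longrightarrow>
        ({u, v} \<in> chosen_edges A E idf port r u \<longleftrightarrow> {u, v} \<in> chosen_edges A E idf port r v)) \<and>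
     approx_matching \<rho> n E (\<Union>v\<in>{..<n}. chosen_edges A E idf port r v)"

definition solved_by :: "real \<Rightarrow> nat \<Rightarrow> local_alg \<Rightarrow> (nat \<Rightarrow> nat \<Rightarrow> bool) \<Rightarrow> (nat \<Rightarrow> nat)
             \<Rightarrow> (nat \<Rightarrow> nat \<Rightarrow> nat) \<Rightarrow> nat \<Rightarrow> bool" where
  "solved_by \<rho> n A E idf port r \<longleftrightarrow>
     (\<forall>r'\<ge>r. output_ok \<rho> n A E idf port r' \<and>
              (\<forall>v<n. alg_out A (run A E idf port r' v) = alg_out A (run A E idf port r v)))"

end

theory Submission
  imports Defs
begin

text \<open>Linial's argument. On a ring whose vertices carry the identifiers \<open>P ! 0, P ! 1, \<dots>\<close>,
  the output of a vertex after \<open>R\<close> rounds depends only on the window of \<open>2R + 1\<close>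
  identifiers around it; call the window marked if its centre selects the edge to its
  successor. Two consecutive windows of an increasing sequence of identifiers are never both
  marked, as the matching would contain two adjacent edges. If every increasing sequence of
  length \<open>L + 2R\<close> had a marked window among its first \<open>L\<close>, the position of one would properly
  colour the shift graph on increasing sequences, and Linial's colour reduction bounds the
  number of identifiers by a tower of height \<open>L + 2R\<close>. For larger \<open>n\<close>, increasing blocks
  with \<open>L\<close> unmarked windows can therefore be split off repeatedly, and the ring built from
  these blocks has fewer than \<open>n / (2\<rho>)\<close> marked vertices, too few for a
  \<open>\<rho>\<close>-approximate matching. With \<open>L \<approx> 16 \<rho> R\<close> this works whenever \<open>R\<close> is a small
  multiple of \<open>log\<^sup>* n / \<rho>\<close>.\<close>

section \<open>Rings and the ring view of a LOCAL algorithm\<close>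

abbreviation ring_succ :: "nat \<Rightarrow> nat \<Rightarrow> nat" where
  "ring_succ n v \<equiv> (v + 1) mod n"

abbreviation ring_pred :: "nat \<Rightarrow> nat \<Rightarrow> nat" where
  "ring_pred n v \<equiv> (v + n - 1) mod n"

lemma ring_succ_eq: "v < n \<Longrightarrow> ring_succ n v = (if v + 1 = n then 0 else v + 1)"
  by auto

lemma ring_pred_eq:
  assumes "v < n"
  shows "ring_pred n v = (if v = 0 then n - 1 else v - 1)"
proof (cases "v = 0")
  case False
  then have "ring_pred n v = (v - 1 + n) mod n"
    by simp
  also have "\<dots> = v - 1"
    using assms by simp
  finally show ?thesis
    using False by simp
qed (use assms in simp)

lemma ring_succ_pred:
  assumes "n \<ge> 3" "v < n"
  shows "ring_succ n (ring_pred n v) = v" "ring_pred n (ring_succ n v) = v"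
    and "ring_succ n v \<noteq> v" "ring_pred n v \<noteq> v" "ring_succ n v \<noteq> ring_pred n v"
    and "ring_succ n (ring_succ n v) \<noteq> v" "ring_pred n (ring_pred n v) \<noteq> v"
  using assms ring_succ_eq[of v n] ring_pred_eq[of v n]
    ring_succ_eq[of "ring_pred n v" n] ring_pred_eq[of "ring_succ n v" n]
    ring_succ_eq[of "ring_succ n v" n] ring_pred_eq[of "ring_pred n v" n]
  by (auto split: if_splits)

lemma cycle_graph_iff:
  assumes "n \<ge> 3" "v < n"
  shows "cycle_graph n v u \<longleftrightarrow> u = ring_succ n v \<or> u = ring_pred n v"
proof
  assume "cycle_graph n v u"
  then have u: "u < n" and "u = ring_succ n v \<or> v = ring_succ n u"
    unfolding cycle_graph_def by auto
  then show "u = ring_succ n v \<or> u = ring_pred n v"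
    using ring_succ_pred(2)[OF assms(1) u] by metis
next
  assume "u = ring_succ n v \<or> u = ring_pred n v"
  then show "cycle_graph n v u"
  proof
    assume "u = ring_succ n v"
    then show ?thesis
      using assms ring_succ_pred(3)[OF assms] unfolding cycle_graph_def by simp
  next
    assume "u = ring_pred n v"
    then show ?thesis
      using assms ring_succ_pred(1,4)[OF assms] unfolding cycle_graph_def by simp
  qed
qed

lemma nbrs_cycle_graph:
  "n \<ge> 3 \<Longrightarrow> v < n \<Longrightarrow> nbrs (cycle_graph n) v = {ring_succ n v, ring_pred n v}"
  using cycle_graph_iff unfolding nbrs_def by auto

lemma deg_cycle_graph: "n \<ge> 3 \<Longrightarrow> v < n \<Longrightarrow> deg (cycle_graph n) v = 2"
  unfolding deg_def using ring_succ_pred(5)[of n v] by (simp add: nbrs_cycle_graph)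

definition ring_port :: "nat \<Rightarrow> nat \<Rightarrow> nat \<Rightarrow> nat" where
  "ring_port n v i = (if i = 0 then ring_succ n v else ring_pred n v)"

lemma ring_port_0 [simp]: "ring_port n v 0 = ring_succ n v"
  and ring_port_Suc [simp]: "ring_port n v (Suc i) = ring_pred n v"
  by (simp_all add: ring_port_def)

lemma valid_ports_ring_port:
  assumes "n \<ge> 3"
  shows "valid_ports n (cycle_graph n) (ring_port n)"
  unfolding valid_ports_def
proof (intro allI impI)
  fix v assume "v < n"
  then show "bij_betw (ring_port n v) {..<deg (cycle_graph n) v} (nbrs (cycle_graph n) v)"
    using assms ring_succ_pred(5)[OF assms \<open>v < n\<close>]
    by (auto simp: deg_cycle_graph nbrs_cycle_graph lessThan_Suc numeral_2_eq_2
        bij_betw_def inj_on_def ring_port_def)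
qed

lemma backport_ring_port:
  assumes "n \<ge> 3" "v < n"
  shows "backport (cycle_graph n) (ring_port n) (ring_succ n v) v = 1"
    and "backport (cycle_graph n) (ring_port n) (ring_pred n v) v = 0"
proof -
  have succ: "ring_succ n v < n" and pred: "ring_pred n v < n"
    using assms by simp_all
  have "ring_port n (ring_succ n v) 1 = v" "ring_port n (ring_succ n v) 0 \<noteq> v"
    "ring_port n (ring_pred n v) 0 = v" "ring_port n (ring_pred n v) 1 \<noteq> v"
    using ring_succ_pred[OF assms] unfolding ring_port_def by simp_all
  then show "backport (cycle_graph n) (ring_port n) (ring_succ n v) v = 1"
    and "backport (cycle_graph n) (ring_port n) (ring_pred n v) v = 0"
    unfolding backport_def deg_cycle_graph[OF assms(1) succ] deg_cycle_graph[OF assms(1) pred]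
    by (auto intro!: the_equality simp: less_2_cases_iff)
qed

text \<open>The state after \<open>r\<close> rounds of a ring vertex, as a function of the identifiers
  \<open>s j\<close> of the vertices at signed distance \<open>j\<close> from it; port 0 leads to distance 1, whose
  port 1 leads back.\<close>
fun ring_state :: "local_alg \<Rightarrow> nat \<Rightarrow> (int \<Rightarrow> nat) \<Rightarrow> nat" where
  "ring_state A 0 s = alg_init A (s 0) 2"
| "ring_state A (Suc r) s = alg_trans A (ring_state A r s)
     (\<lambda>i. if i < 2
          then Some (alg_msg A (ring_state A r (\<lambda>j. s (j + (if i = 0 then 1 else -1))))
                               (if i = 0 then 1 else 0))
          else None)"

lemma ring_state_cong:
  "(\<And>j. \<bar>j\<bar> \<le> int r \<Longrightarrow> s j = s' j) \<Longrightarrow> ring_state A r s = ring_state A r s'"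
proof (induction r arbitrary: s s')
  case (Suc r)
  have "ring_state A r s = ring_state A r s'"
    by (intro Suc.IH Suc.prems) auto
  moreover have "ring_state A r (\<lambda>j. s (j + (if i = 0 then 1 else -1)))
      = ring_state A r (\<lambda>j. s' (j + (if i = 0 then 1 else -1)))" for i :: nat
    by (intro Suc.IH Suc.prems) auto
  ultimately show ?case by (simp only: ring_state.simps)
qed simp

definition ring_ids :: "nat \<Rightarrow> (nat \<Rightarrow> nat) \<Rightarrow> nat \<Rightarrow> int \<Rightarrow> nat" where
  "ring_ids n idf v j = idf (nat ((int v + j) mod int n))"

lemma ring_ids_shift:
  assumes "v < n"
  shows "(\<lambda>j. ring_ids n idf v (j + 1)) = ring_ids n idf (ring_succ n v)"
    and "(\<lambda>j. ring_ids n idf v (j - 1)) = ring_ids n idf (ring_pred n v)"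
proof -
  have "(int v + (j + 1)) mod int n = (int (ring_succ n v) + j) mod int n" for j
    by (simp add: zmod_int mod_add_right_eq algebra_simps)
  moreover have "(int v + (j - 1)) mod int n = (int (ring_pred n v) + j) mod int n" for j
  proof -
    have "int (ring_pred n v) = (int v + int n - 1) mod int n"
      using assms by (simp add: zmod_int of_nat_diff)
    then have "(int (ring_pred n v) + j) mod int n = (int v + (j - 1) + int n) mod int n"
      by (simp add: mod_add_right_eq algebra_simps)
    then show ?thesis by simp
  qed
  ultimately show "(\<lambda>j. ring_ids n idf v (j + 1)) = ring_ids n idf (ring_succ n v)"
    and "(\<lambda>j. ring_ids n idf v (j - 1)) = ring_ids n idf (ring_pred n v)"
    unfolding ring_ids_def by auto
qed

lemma run_cycle_graph:
  assumes "n \<ge> 3" "v < n"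
  shows "run A (cycle_graph n) idf (ring_port n) r v = ring_state A r (ring_ids n idf v)"
  using assms(2)
proof (induction r arbitrary: v)
  case 0
  then show ?case using assms(1) by (simp add: deg_cycle_graph ring_ids_def)
next
  case (Suc r)
  have nbrs: "ring_succ n v < n" "ring_pred n v < n" using assms(1) by auto
  have "(if i < deg (cycle_graph n) v
         then Some (alg_msg A (run A (cycle_graph n) idf (ring_port n) r (ring_port n v i))
                (backport (cycle_graph n) (ring_port n) (ring_port n v i) v))
         else None)
      = (if i < 2
         then Some (alg_msg A (ring_state A r (\<lambda>j. ring_ids n idf v (j + (if i = 0 then 1 else -1))))
                (if i = 0 then 1 else 0))
         else None)" for i
    using Suc.IH[OF nbrs(1)] Suc.IH[OF nbrs(2)] deg_cycle_graph[OF assms(1) Suc.prems]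
      backport_ring_port[OF assms(1) Suc.prems] ring_ids_shift[OF Suc.prems]
    by (cases i) simp_all
  then show ?case using Suc.IH[OF Suc.prems] by simp
qed

section \<open>Matchings on rings\<close>

lemma finite_matchings: "finite {M. is_matching n E M}"
proof -
  have "graph_edges n E \<subseteq> (\<lambda>(u, v). {u, v}) ` ({..<n} \<times> {..<n})"
    unfolding graph_edges_def by auto
  then have "finite (graph_edges n E)"
    by (rule finite_subset) auto
  then show ?thesis
    unfolding is_matching_def by (auto intro: finite_subset[of _ "Pow (graph_edges n E)"])
qed

lemma card_le_max_matching_size: "is_matching n E M \<Longrightarrow> card M \<le> max_matching_size n E"
  unfolding max_matching_size_def using finite_matchings by (auto intro: Max_ge)

lemma is_matching_cycle_graph_pairs:
  "is_matching n (cycle_graph n) ((\<lambda>i. {2 * i, 2 * i + 1}) ` {..<n div 2})"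
  unfolding is_matching_def
proof (intro conjI ballI impI subsetI)
  fix e assume "e \<in> (\<lambda>i. {2 * i, 2 * i + 1}) ` {..<n div 2}"
  then obtain i where "i < n div 2" "e = {2 * i, 2 * i + 1}"
    by auto
  moreover from this(1) have "2 * i + 1 < n"
    by linarith
  ultimately show "e \<in> graph_edges n (cycle_graph n)"
    unfolding graph_edges_def cycle_graph_def by fastforce
next
  fix e e' assume "e \<in> (\<lambda>i. {2 * i, 2 * i + 1}) ` {..<n div 2}"
    "e' \<in> (\<lambda>i. {2 * i, 2 * i + 1}) ` {..<n div 2}" "e \<noteq> e'"
  then obtain i i' where "e = {2 * i, 2 * i + 1}" "e' = {2 * i', 2 * i' + 1}" "i \<noteq> i'"
    by auto
  moreover have "2 * i \<noteq> 2 * i' + 1" "2 * i + 1 \<noteq> 2 * i'"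
    by presburger+
  ultimately show "e \<inter> e' = {}" by auto
qed

lemma max_matching_size_cycle_graph: "n div 2 \<le> max_matching_size n (cycle_graph n)"
proof -
  have "inj_on (\<lambda>i. {2 * i, 2 * i + 1}) {..<n div 2}"
    by (auto simp: inj_on_def doubleton_eq_iff)
  then have "card ((\<lambda>i. {2 * i, 2 * i + 1}) ` {..<n div 2}) = n div 2"
    by (simp add: card_image)
  then show ?thesis
    using card_le_max_matching_size[OF is_matching_cycle_graph_pairs[of n]] by simp
qed

locale ring_matching_output =
  fixes \<rho> :: real and n :: nat and A :: local_alg and idf :: "nat \<Rightarrow> nat" and r :: nat
  assumes ring: "n \<ge> 3"
    and ok: "output_ok \<rho> n A (cycle_graph n) idf (ring_port n) r"
begin

abbreviation out :: "nat \<Rightarrow> nat set" where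
  "out v \<equiv> alg_out A (run A (cycle_graph n) idf (ring_port n) r v)"

abbreviation chosen :: "nat \<Rightarrow> nat set set" where
  "chosen v \<equiv> chosen_edges A (cycle_graph n) idf (ring_port n) r v"

lemma out_subset: "v < n \<Longrightarrow> out v \<subseteq> {0, 1}"
  using ok deg_cycle_graph[OF ring] unfolding output_ok_def by fastforce

lemma chosen_succ_iff:
  assumes "v < n"
  shows "{v, ring_succ n v} \<in> chosen v \<longleftrightarrow> 0 \<in> out v"
proof -
  have "{v, ring_succ n v} \<in> chosen v \<longleftrightarrow> (\<exists>i\<in>out v. ring_port n v i = ring_succ n v)"
    using ring_succ_pred(3)[OF ring assms] unfolding chosen_edges_def
    by (auto simp: doubleton_eq_iff) metis
  also have "\<dots> \<longleftrightarrow> 0 \<in> out v"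
    using out_subset[OF assms] ring_succ_pred(5)[OF ring assms] by (auto simp: ring_port_def)
  finally show ?thesis .
qed

lemma chosen_pred_iff:
  assumes "v < n"
  shows "{v, ring_pred n v} \<in> chosen v \<longleftrightarrow> 1 \<in> out v"
proof -
  have "{v, ring_pred n v} \<in> chosen v \<longleftrightarrow> (\<exists>i\<in>out v. ring_port n v i = ring_pred n v)"
    using ring_succ_pred(4)[OF ring assms] unfolding chosen_edges_def
    by (auto simp: doubleton_eq_iff) metis
  also have "\<dots> \<longleftrightarrow> 1 \<in> out v"
    using out_subset[OF assms] ring_succ_pred(5)[OF ring assms] by (auto simp: ring_port_def)
  finally show ?thesis .
qed

abbreviation matching :: "nat set set" where
  "matching \<equiv> \<Union>v\<in>{..<n}. chosen v"

lemma out_0_iff_succ_out_1: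
  assumes "v < n"
  shows "0 \<in> out v \<longleftrightarrow> 1 \<in> out (ring_succ n v)"
proof -
  have succ: "ring_succ n v < n" using ring by simp
  have "cycle_graph n v (ring_succ n v)"
    using cycle_graph_iff[OF ring assms] by simp
  then have "{v, ring_succ n v} \<in> chosen v \<longleftrightarrow> {v, ring_succ n v} \<in> chosen (ring_succ n v)"
    using ok assms succ unfolding output_ok_def by blast
  moreover have "{v, ring_succ n v} = {ring_succ n v, ring_pred n (ring_succ n v)}"
    using ring_succ_pred(2)[OF ring assms] by auto
  ultimately show ?thesis
    using chosen_succ_iff[OF assms] chosen_pred_iff[OF succ] by simp
qed

lemma is_matching_matching: "is_matching n (cycle_graph n) matching"
  using ok unfolding output_ok_def approx_matching_def by blast

lemma not_out_0_succ:
  assumes "v < n" "0 \<in> out v"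
  shows "0 \<notin> out (ring_succ n v)"
proof
  assume "0 \<in> out (ring_succ n v)"
  moreover have "ring_succ n v < n"
    using ring by simp
  ultimately have e2: "{ring_succ n v, ring_succ n (ring_succ n v)} \<in> matching"
    using chosen_succ_iff by blast
  have e1: "{v, ring_succ n v} \<in> matching"
    using chosen_succ_iff[OF assms(1)] assms by blast
  have distinct: "{v, ring_succ n v} \<noteq> {ring_succ n v, ring_succ n (ring_succ n v)}"
    using ring_succ_pred(3,6)[OF ring assms(1)] by (auto simp: doubleton_eq_iff)
  have disjoint: "\<forall>e\<in>matching. \<forall>e'\<in>matching. e \<noteq> e' \<longrightarrow> e \<inter> e' = {}"
    using is_matching_matching unfolding is_matching_def by (rule conjunct2)
  have "{v, ring_succ n v} \<inter> {ring_succ n v, ring_succ n (ring_succ n v)} = {}"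
    by (rule mp[OF bspec[OF bspec[OF disjoint e1] e2] distinct])
  then show False by simp
qed

lemma matching_subset: "matching \<subseteq> (\<lambda>v. {v, ring_succ n v}) ` {v. v < n \<and> 0 \<in> out v}"
proof
  fix e assume "e \<in> matching"
  then obtain v i where v: "v < n" "i \<in> out v" "e = {v, ring_port n v i}"
    unfolding chosen_edges_def by auto
  show "e \<in> (\<lambda>v. {v, ring_succ n v}) ` {v. v < n \<and> 0 \<in> out v}"
  proof (cases "i = 0")
    case True
    then show ?thesis using v by auto
  next
    case False
    let ?u = "ring_pred n v"
    have "i = 1" using out_subset[OF v(1)] v(2) False by auto
    then have e: "e = {v, ?u}" using v(3) by (simp add: ring_port_def)
    have u: "?u < n" "ring_succ n ?u = v"
      using ring ring_succ_pred(1)[OF ring v(1)] by auto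
    then have "0 \<in> out ?u"
      using out_0_iff_succ_out_1[OF u(1)] v(2) \<open>i = 1\<close> by simp
    moreover have "e = {?u, ring_succ n ?u}"
      using e u(2) by auto
    ultimately show ?thesis using u(1) by blast
  qed
qed

lemma card_out_0_ge:
  assumes "\<rho> \<ge> 0"
  shows "real (n div 2) / \<rho> \<le> card {v. v < n \<and> 0 \<in> out v}"
proof -
  have "card matching \<le> card ((\<lambda>v. {v, ring_succ n v}) ` {v. v < n \<and> 0 \<in> out v})"
    by (rule card_mono[OF _ matching_subset]) simp
  also have "\<dots> \<le> card {v. v < n \<and> 0 \<in> out v}"
    by (rule card_image_le) simp
  finally have "card matching \<le> card {v. v < n \<and> 0 \<in> out v}" .
  moreover have "real (n div 2) / \<rho> \<le> real (max_matching_size n (cycle_graph n)) / \<rho>"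
    using max_matching_size_cycle_graph assms by (simp add: divide_right_mono)
  moreover have "\<dots> \<le> card matching"
    using ok unfolding output_ok_def approx_matching_def by blast
  ultimately show ?thesis by linarith
qed

end

section \<open>Linial's colour reduction\<close>

definition tower :: "nat \<Rightarrow> nat \<Rightarrow> nat" where
  "tower k c = ((\<lambda>x. 2 ^ x) ^^ k) c"

lemma tower_0 [simp]: "tower 0 c = c"
  and tower_Suc [simp]: "tower (Suc k) c = 2 ^ tower k c"
  by (simp_all add: tower_def)

lemma tower_Suc_right: "tower (Suc k) c = tower k (2 ^ c)"
  unfolding tower_def by (simp add: funpow_Suc_right del: funpow.simps)

lemma tower_add: "tower (j + k) c = tower j (tower k c)"
  unfolding tower_def by (simp add: funpow_add)

lemma tower_mono: "c \<le> d \<Longrightarrow> tower k c \<le> tower k d"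
  by (induction k) simp_all

lemma add_le_tower: "c + k \<le> tower k c"
proof (induction k)
  case (Suc k)
  then show ?case unfolding tower_Suc using less_exp[of "tower k c"] by linarith
qed simp

definition sorted_tuples :: "nat set \<Rightarrow> nat \<Rightarrow> nat list set" where
  "sorted_tuples T k = {xs. length xs = k \<and> sorted_wrt (<) xs \<and> set xs \<subseteq> T}"

lemma sorted_tuples_mono: "S \<subseteq> T \<Longrightarrow> sorted_tuples S k \<subseteq> sorted_tuples T k"
  unfolding sorted_tuples_def by auto

lemma sorted_tuples_take_drop:
  "xs \<in> sorted_tuples T m \<Longrightarrow> i + j \<le> m \<Longrightarrow> take j (drop i xs) \<in> sorted_tuples T j"
  unfolding sorted_tuples_def
  by (auto simp: sorted_wrt_take sorted_wrt_drop dest: in_set_takeD in_set_dropD)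

lemma sorted_tuples_butlast_tl:
  assumes "ys \<in> sorted_tuples T (Suc k)"
  shows "butlast ys \<in> sorted_tuples T k" "tl ys \<in> sorted_tuples T k"
proof -
  have "length ys = Suc k" using assms unfolding sorted_tuples_def by simp
  then have "butlast ys = take k (drop 0 ys)" "tl ys = take k (drop 1 ys)"
    by (simp_all add: butlast_conv_take drop_Suc)
  then show "butlast ys \<in> sorted_tuples T k" "tl ys \<in> sorted_tuples T k"
    using sorted_tuples_take_drop[OF assms, of 0 k] sorted_tuples_take_drop[OF assms, of 1 k]
    by simp_all
qed

lemma sorted_tuples_snoc:
  "xs \<in> sorted_tuples T k \<Longrightarrow> z \<in> T \<Longrightarrow> \<forall>x\<in>set xs. x < z \<Longrightarrow> xs @ [z] \<in> sorted_tuples T (Suc k)"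
  unfolding sorted_tuples_def by (auto simp: sorted_wrt_append)

definition shift_colouring :: "nat set \<Rightarrow> nat \<Rightarrow> nat \<Rightarrow> (nat list \<Rightarrow> nat) \<Rightarrow> bool" where
  "shift_colouring T k c f \<longleftrightarrow>
     (\<forall>xs\<in>sorted_tuples T k. f xs < c) \<and>
     (\<forall>ys\<in>sorted_tuples T (Suc k). f (butlast ys) \<noteq> f (tl ys))"

lemma card_le_of_shift_colouring_1:
  assumes "shift_colouring T 1 c f"
  shows "card T \<le> c"
proof -
  have "inj_on (\<lambda>x. f [x]) T"
  proof (rule inj_onI, rule ccontr)
    fix x y assume "x \<in> T" "y \<in> T" "f [x] = f [y]" "x \<noteq> y"
    then have "[min x y, max x y] \<in> sorted_tuples T 2" "f [min x y] = f [max x y]"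
      unfolding sorted_tuples_def by (auto simp: min_def max_def)
    then show False
      using assms unfolding shift_colouring_def by (fastforce simp: numeral_2_eq_2)
  qed
  moreover have "(\<lambda>x. f [x]) ` T \<subseteq> {..<c}"
    using assms unfolding shift_colouring_def sorted_tuples_def by auto
  ultimately show ?thesis
    using card_inj_on_le[of _ T "{..<c}"] by simp
qed

definition extension_colours :: "nat set \<Rightarrow> (nat list \<Rightarrow> nat) \<Rightarrow> nat list \<Rightarrow> nat set" where
  "extension_colours T f xs = {f (xs @ [z]) | z. z \<in> T \<and> (\<forall>x\<in>set xs. x < z)}"

lemma extension_colours_subset:
  assumes "shift_colouring T (Suc k) c f" "xs \<in> sorted_tuples T k"
  shows "extension_colours T f xs \<subseteq> {..<c}"
  using assms sorted_tuples_snoc[OF assms(2)]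
  unfolding extension_colours_def shift_colouring_def by blast

lemma extension_colours_butlast_tl:
  assumes f: "shift_colouring T (Suc (Suc k)) c f" and ys: "ys \<in> sorted_tuples T (Suc (Suc k))"
  shows "extension_colours T f (butlast ys) \<noteq> extension_colours T f (tl ys)"
proof
  assume same: "extension_colours T f (butlast ys) = extension_colours T f (tl ys)"
  have "length ys = Suc (Suc k)"
    using ys unfolding sorted_tuples_def by simp
  then obtain a b zs where ys_eq: "ys = a # b # zs"
    by (auto simp: length_Suc_conv)
  then have "ys \<noteq> []"
    by simp
  then have "sorted_wrt (<) (butlast ys @ [last ys])" "last ys \<in> T"
    using ys last_in_set[of ys] unfolding sorted_tuples_def by auto
  then have "f (butlast ys @ [last ys]) \<in> extension_colours T f (butlast ys)"
    unfolding extension_colours_def by (auto simp: sorted_wrt_append)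
  then have "f ys \<in> extension_colours T f (tl ys)"
    using same \<open>ys \<noteq> []\<close> by simp
  then obtain z where z: "z \<in> T" "\<forall>x\<in>set (tl ys). x < z" "f ys = f (tl ys @ [z])"
    unfolding extension_colours_def by auto
  then have "\<forall>x\<in>set ys. x < z"
    using ys ys_eq unfolding sorted_tuples_def by (auto intro: less_trans)
  then have "ys @ [z] \<in> sorted_tuples T (Suc (Suc (Suc k)))"
    using sorted_tuples_snoc[OF ys z(1)] by blast
  then have "f (butlast (ys @ [z])) \<noteq> f (tl (ys @ [z]))"
    using f unfolding shift_colouring_def by blast
  then show False
    using z(3) ys_eq by simp
qed

text \<open>One round of Linial's colour reduction: colour a tuple by the set of colours of its
  one-step extensions.\<close>
lemma shift_colouring_reduce:
  assumes f: "shift_colouring T (Suc (Suc k)) c f"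
  obtains g where "shift_colouring T (Suc k) (2 ^ c) g"
proof -
  obtain code where code: "bij_betw code (Pow {..<c}) {0..<(2::nat) ^ c}"
    using ex_bij_betw_finite_nat[of "Pow {..<c}"] by (auto simp: card_Pow)
  let ?S = "extension_colours T f"
  have "shift_colouring T (Suc k) (2 ^ c) (\<lambda>xs. code (?S xs))"
    unfolding shift_colouring_def
  proof (intro conjI ballI)
    fix xs assume "xs \<in> sorted_tuples T (Suc k)"
    then show "code (?S xs) < 2 ^ c"
      using extension_colours_subset[OF f] code by (auto simp: bij_betw_def)
  next
    fix ys assume ys: "ys \<in> sorted_tuples T (Suc (Suc k))"
    then have "?S (butlast ys) \<in> Pow {..<c}" "?S (tl ys) \<in> Pow {..<c}"
      using extension_colours_subset[OF f] sorted_tuples_butlast_tl[OF ys] by auto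
    then show "code (?S (butlast ys)) \<noteq> code (?S (tl ys))"
      using extension_colours_butlast_tl[OF f ys] code unfolding bij_betw_def inj_on_def by blast
  qed
  then show thesis
    by (rule that)
qed

lemma card_le_tower_of_shift_colouring:
  "shift_colouring T (Suc k) c f \<Longrightarrow> card T \<le> tower k c"
proof (induction k arbitrary: c f)
  case 0
  then show ?case by (simp add: card_le_of_shift_colouring_1)
next
  case (Suc k)
  then obtain g where "shift_colouring T (Suc k) (2 ^ c) g"
    by (blast elim: shift_colouring_reduce)
  then show ?case unfolding tower_Suc_right by (rule Suc.IH)
qed

definition window :: "nat \<Rightarrow> nat \<Rightarrow> 'a list \<Rightarrow> 'a list" where
  "window R k xs = take (2 * R + 1) (drop k xs)"

lemma window_take_drop:
  "k + 2 * R + 1 \<le> m \<Longrightarrow> window R k (take m (drop i xs)) = window R (i + k) xs"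
  unfolding window_def by (simp add: take_drop min_def add.commute)

lemma window_tl: "window R k (tl xs) = window R (Suc k) xs"
  unfolding window_def by (simp add: drop_Suc)

definition no_adjacent_marked :: "nat \<Rightarrow> (nat list \<Rightarrow> bool) \<Rightarrow> nat set \<Rightarrow> bool" where
  "no_adjacent_marked R marked T \<longleftrightarrow>
     (\<forall>xs\<in>sorted_tuples T (2 * R + 2). \<not> (marked (window R 0 xs) \<and> marked (window R 1 xs)))"

lemma no_adjacent_marked_mono:
  "no_adjacent_marked R marked T \<Longrightarrow> S \<subseteq> T \<Longrightarrow> no_adjacent_marked R marked S"
  unfolding no_adjacent_marked_def using sorted_tuples_mono by blast

lemma no_adjacent_marked_window:
  assumes "no_adjacent_marked R marked T" "xs \<in> sorted_tuples T m" "e + 2 * R + 2 \<le> m"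
  shows "\<not> (marked (window R e xs) \<and> marked (window R (Suc e) xs))"
proof -
  have "take (2 * R + 2) (drop e xs) \<in> sorted_tuples T (2 * R + 2)"
    using sorted_tuples_take_drop[OF assms(2)] assms(3) by simp
  then show ?thesis
    using assms(1) window_take_drop[of 0 R "2 * R + 2" e xs] window_take_drop[of 1 R "2 * R + 2" e xs]
    unfolding no_adjacent_marked_def by auto
qed

definition marked_early :: "nat \<Rightarrow> nat \<Rightarrow> (nat list \<Rightarrow> bool) \<Rightarrow> nat set \<Rightarrow> bool" where
  "marked_early R L marked T \<longleftrightarrow> (\<forall>xs\<in>sorted_tuples T (L + 2 * R). \<exists>k<L. marked (window R k xs))"

text \<open>Colouring a tuple by the position of a marked window among its first \<open>L\<close> ones is a
  proper shift colouring, since equal colours of the two halves of a longer tuple would give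
  two adjacent marked windows.\<close>
lemma card_le_tower_if_marked_early:
  assumes "L \<ge> 1" and adjacent: "no_adjacent_marked R marked T"
    and early: "marked_early R L marked T"
  shows "card T \<le> tower (L + 2 * R - 1) L"
proof -
  define W where "W = L + 2 * R"
  define pos where "pos xs = (LEAST k. marked (window R k xs))" for xs
  have pos: "pos xs < L" "marked (window R (pos xs) xs)" if xs: "xs \<in> sorted_tuples T W" for xs
  proof -
    obtain k where "k < L" "marked (window R k xs)"
      using early xs unfolding marked_early_def W_def by blast
    then show "pos xs < L" "marked (window R (pos xs) xs)"
      unfolding pos_def by (auto intro: LeastI Least_le order.strict_trans1)
  qed
  have "shift_colouring T W L pos"
    unfolding shift_colouring_def
  proof (intro conjI ballI notI)
    fix xs assume "xs \<in> sorted_tuples T W"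
    then show "pos xs < L" by (rule pos)
  next
    fix ys assume ys: "ys \<in> sorted_tuples T (Suc W)" and eq: "pos (butlast ys) = pos (tl ys)"
    define e where "e = pos (tl ys)"
    have len: "length ys = Suc W" using ys unfolding sorted_tuples_def by simp
    have "e < L" "marked (window R e (butlast ys))" "marked (window R e (tl ys))"
      using pos[OF sorted_tuples_butlast_tl(1)[OF ys]] pos[OF sorted_tuples_butlast_tl(2)[OF ys]] eq
      unfolding e_def by simp_all
    moreover have "butlast ys = take W (drop 0 ys)"
      using len by (simp add: butlast_conv_take)
    ultimately have "marked (window R e ys)" "marked (window R (Suc e) ys)"
      using window_take_drop[of e R W 0 ys] window_tl[of R e ys] unfolding W_def by simp_all
    then show False
      using no_adjacent_marked_window[OF adjacent ys] \<open>e < L\<close> unfolding W_def by simp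
  qed
  then have "card T \<le> tower (W - 1) L"
    using \<open>L \<ge> 1\<close> card_le_tower_of_shift_colouring[of T "W - 1"] unfolding W_def by simp
  then show ?thesis unfolding W_def .
qed

definition unmarked_count :: "nat \<Rightarrow> (nat list \<Rightarrow> bool) \<Rightarrow> nat list \<Rightarrow> nat" where
  "unmarked_count R marked xs = card {k. k + 2 * R < length xs \<and> \<not> marked (window R k xs)}"

lemma unmarked_count_append:
  assumes "length ys = L + 2 * R" and "\<forall>k<L. \<not> marked (window R k ys)"
  shows "L + unmarked_count R marked xs \<le> unmarked_count R marked (ys @ xs)"
proof -
  let ?U = "{k. k + 2 * R < length xs \<and> \<not> marked (window R k xs)}"
  let ?V = "{k. k + 2 * R < length (ys @ xs) \<and> \<not> marked (window R k (ys @ xs))}"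
  have "window R k (ys @ xs) = window R k ys" if "k < L" for k
    using that assms(1) unfolding window_def by simp
  moreover have "window R (L + 2 * R + k) (ys @ xs) = window R k xs" for k
    using assms(1) unfolding window_def by simp
  ultimately have "{..<L} \<union> (\<lambda>k. L + 2 * R + k) ` ?U \<subseteq> ?V"
    using assms by auto
  moreover have "finite ?V"
    by (rule finite_subset[of _ "{..<length (ys @ xs)}"]) auto
  ultimately have "card ({..<L} \<union> (\<lambda>k. L + 2 * R + k) ` ?U) \<le> card ?V"
    by (rule card_mono[rotated])
  moreover have "finite ?U"
    by (rule finite_subset[of _ "{..<length xs}"]) auto
  then have "card ({..<L} \<union> (\<lambda>k. L + 2 * R + k) ` ?U) = L + card ?U"
    by (subst card_Un_disjoint) (auto simp: card_image)
  ultimately show ?thesis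
    unfolding unmarked_count_def by simp
qed

lemma exists_unmarked_block:
  assumes "L \<ge> 1" "no_adjacent_marked R marked T" "card T > tower (L + 2 * R - 1) L"
  obtains ys where "ys \<in> sorted_tuples T (L + 2 * R)" "\<forall>k<L. \<not> marked (window R k ys)"
proof -
  have "\<not> marked_early R L marked T"
    using card_le_tower_if_marked_early[OF assms(1,2)] assms(3) by (meson leD)
  then show thesis
    using that unfolding marked_early_def by blast
qed

lemma exists_list_many_unmarked:
  assumes "L \<ge> 1" and "no_adjacent_marked R marked T" and "finite T"
  shows "\<exists>xs. distinct xs \<and> set xs = T \<and>
    L * card T \<le> (L + 2 * R) * unmarked_count R marked xs + L * (tower (L + 2 * R - 1) L + 1)"
  using assms(2,3)
proof (induction "card T" arbitrary: T rule: less_induct)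
  case less
  let ?B = "tower (L + 2 * R - 1) L"
  show ?case
  proof (cases "card T \<le> ?B")
    case True
    then have "L * card T \<le> L * (?B + 1)"
      by (intro mult_le_mono2) simp
    then show ?thesis
      using less.prems by (intro exI[of _ "sorted_list_of_set T"]) auto
  next
    case False
    then have "card T > ?B"
      by simp
    then obtain ys where ys: "ys \<in> sorted_tuples T (L + 2 * R)"
      and unmarked: "\<forall>k<L. \<not> marked (window R k ys)"
      using exists_unmarked_block[OF \<open>L \<ge> 1\<close> less.prems(1)] by blast
    then have ys_distinct: "distinct ys" and ys_T: "set ys \<subseteq> T"
      and card_ys: "card (set ys) = L + 2 * R"
      unfolding sorted_tuples_def by (auto simp: strict_sorted_iff distinct_card)
    define T' where "T' = T - set ys"
    have card_T: "card T = card T' + (L + 2 * R)"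
      unfolding T'_def using card_Diff_subset[OF _ ys_T] card_mono[OF less.prems(2) ys_T] card_ys
      by simp
    then have "card T' < card T"
      using \<open>L \<ge> 1\<close> by simp
    moreover have "no_adjacent_marked R marked T'" "finite T'"
      using no_adjacent_marked_mono[OF less.prems(1)] less.prems(2) unfolding T'_def by auto
    ultimately obtain xs where xs: "distinct xs" "set xs = T'"
      "L * card T' \<le> (L + 2 * R) * unmarked_count R marked xs + L * (?B + 1)"
      using less.hyps by blast
    have "L * card T = L * card T' + (L + 2 * R) * L"
      using card_T by (simp add: algebra_simps)
    also have "\<dots> \<le> (L + 2 * R) * (L + unmarked_count R marked xs) + L * (?B + 1)"
      using xs(3) by (simp add: algebra_simps)
    also have "\<dots> \<le> (L + 2 * R) * unmarked_count R marked (ys @ xs) + L * (?B + 1)"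
      using unmarked_count_append[OF _ unmarked, of xs] ys unfolding sorted_tuples_def by simp
    finally show ?thesis
      using xs ys_distinct ys_T unfolding T'_def by (intro exI[of _ "ys @ xs"]) auto
  qed
qed

section \<open>The iterated logarithm\<close>

lemma tower_less_if_iterated_log_gt_1:
  "\<forall>i\<le>k. (log 2 ^^ i) x > 1 \<Longrightarrow> real (tower k 1) < x"
proof (induction k arbitrary: x)
  case (Suc k)
  have "x > 1"
    using Suc.prems[rule_format, of 0] by simp
  have "\<forall>i\<le>k. (log 2 ^^ i) (log 2 x) > 1"
    using Suc.prems by (auto simp: funpow_Suc_right simp del: funpow.simps)
  then have "real (tower k 1) < log 2 x"
    by (rule Suc.IH)
  then show ?case
    using \<open>x > 1\<close> by (simp add: less_log_iff powr_realpow)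
qed simp

lemma tower_less_if_less_log_star:
  assumes "k < log_star n"
  shows "tower k 1 < n"
proof -
  have "\<forall>i\<le>k. (log 2 ^^ i) (real n) > 1"
  proof (intro allI impI)
    fix i assume "i \<le> k"
    then have "i < (LEAST k. (log 2 ^^ k) (real n) \<le> 1)"
      using assms unfolding log_star_def by simp
    then show "(log 2 ^^ i) (real n) > 1"
      by (meson not_less_Least not_le)
  qed
  then have "real (tower k 1) < real n"
    by (rule tower_less_if_iterated_log_gt_1)
  then show ?thesis
    by simp
qed

lemma square_le_two_power: "a \<ge> 4 \<Longrightarrow> a * a \<le> (2::nat) ^ a"
proof (induction a rule: nat_induct_at_least)
  case (Suc a)
  have "4 * a \<le> a * a"
    using Suc.hyps by (rule mult_le_mono1)
  moreover have "Suc a * Suc a = a * a + 2 * a + 1"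
    by simp
  ultimately have "Suc a * Suc a \<le> a * a + a * a"
    using Suc.hyps by linarith
  also have "\<dots> \<le> 2 ^ Suc a"
    using Suc.IH by simp
  finally show ?case .
qed simp

lemma tower_le_tower_1: "tower k c \<le> tower (k + c) 1"
proof -
  have "tower k c \<le> tower k (tower c 1)"
    using add_le_tower[of 1 c] by (simp add: tower_mono)
  then show ?thesis
    by (simp add: tower_add)
qed

lemma mult_Suc_le_two_power:
  fixes a b t :: nat
  assumes "a < t" "b \<le> t" "4 \<le> t"
  shows "a * (b + 1) \<le> 2 ^ t"
proof -
  have "a * (b + 1) \<le> (t - 1) * (t + 1)"
    using assms by (intro mult_le_mono) auto
  also have "\<dots> \<le> t * t"
    by (simp add: algebra_simps)
  also have "\<dots> \<le> 2 ^ t"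
    using assms(3) by (rule square_le_two_power)
  finally show ?thesis .
qed

lemma radius_bounds_nat:
  fixes R p n :: nat
  defines "L \<equiv> 16 * R * p"
  assumes R: "R \<ge> 1" and p: "p \<ge> 1" and small: "34 * R * p < log_star n"
  shows "2 * R + 2 < n" "8 * p * (tower (L + 2 * R - 1) L + 1) \<le> n"
proof -
  define X where "X = 2 * L + 2 * R - 1"
  have L: "L \<ge> 16" "8 * p \<le> L"
    unfolding L_def using R p by (simp_all add: mult_le_mono)
  have "R \<le> R * p"
    using p by simp
  then have "Suc X < log_star n"
    using small R unfolding X_def L_def by linarith
  then have n: "2 ^ tower X 1 < n"
    using tower_less_if_less_log_star by fastforce
  have X: "X < tower X 1"
    using add_le_tower[of 1 X] by simp
  then show "2 * R + 2 < n"
    using n less_exp[of "tower X 1"] L(1) unfolding X_def by linarith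
  have "tower (L + 2 * R - 1) L \<le> tower X 1"
    using tower_le_tower_1[of "L + 2 * R - 1" L] L(1) unfolding X_def by (simp add: algebra_simps)
  then have "8 * p * (tower (L + 2 * R - 1) L + 1) \<le> 2 ^ tower X 1"
    using L X unfolding X_def by (intro mult_Suc_le_two_power) auto
  then show "8 * p * (tower (L + 2 * R - 1) L + 1) \<le> n"
    using n by simp
qed

lemma parameters_for_radius:
  fixes R n :: nat and \<rho> :: real
  assumes "R \<ge> 1" "\<rho> \<ge> 1" and small: "1000 * \<rho> * R < log_star n"
  obtains L :: nat where "L \<ge> 1" "2 * R + 2 < n" "16 * \<rho> * R \<le> L"
    "8 * \<rho> * (tower (L + 2 * R - 1) L + 1) \<le> n"
proof
  define p where "p = nat \<lceil>\<rho>\<rceil>"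
  have p: "\<rho> \<le> p" "p \<le> 2 * \<rho>" "p \<ge> 1"
    unfolding p_def using assms(2) by linarith+
  have "real (34 * R * p) = 34 * real R * real p"
    by simp
  also have "\<dots> \<le> 34 * real R * (2 * \<rho>)"
    using p(2) by (intro mult_left_mono) auto
  finally have "real (34 * R * p) \<le> 34 * real R * (2 * \<rho>)" .
  moreover have "0 \<le> \<rho> * R"
    using assms(2) by simp
  ultimately have "real (34 * R * p) < real (log_star n)"
    using small by (simp add: algebra_simps)
  then have "34 * R * p < log_star n"
    by (simp only: of_nat_less_iff)
  note bounds = radius_bounds_nat[OF assms(1) p(3) this]
  then show "2 * R + 2 < n"
    by blast
  show "16 * \<rho> * R \<le> 16 * R * p"
    using mult_right_mono[OF p(1), of "real R"] by (simp add: mult.commute)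
  have "real (8 * p * (tower (16 * R * p + 2 * R - 1) (16 * R * p) + 1)) \<le> real n"
    using bounds(2) by (rule of_nat_mono)
  then have "8 * real p * (tower (16 * R * p + 2 * R - 1) (16 * R * p) + 1) \<le> n"
    by (simp add: algebra_simps)
  moreover have "8 * \<rho> * (tower (16 * R * p + 2 * R - 1) (16 * R * p) + 1)
      \<le> 8 * real p * (tower (16 * R * p + 2 * R - 1) (16 * R * p) + 1)"
    using p(1) by (intro mult_right_mono) auto
  ultimately show "8 * \<rho> * (tower (16 * R * p + 2 * R - 1) (16 * R * p) + 1) \<le> n"
    by linarith
  show "16 * R * p \<ge> 1"
    using assms(1) p(3) by simp
qed

section \<open>The lower bound\<close>

definition id_list :: "nat \<Rightarrow> nat list \<Rightarrow> bool" where
  "id_list n P \<longleftrightarrow> distinct P \<and> set P = {..<n}"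

lemma length_id_list: "id_list n P \<Longrightarrow> length P = n"
  unfolding id_list_def using distinct_card by fastforce

lemma valid_ids_id_list:
  assumes "C \<ge> 1" "id_list n P"
  shows "valid_ids C n ((!) P)"
  unfolding valid_ids_def
proof (intro conjI allI impI)
  have "length P = n"
    using length_id_list[OF assms(2)] .
  then show "inj_on ((!) P) {..<n}"
    using assms(2) unfolding id_list_def by (simp add: inj_on_nth)
  fix v assume "v < n"
  then have "P ! v < n"
    using assms(2) \<open>length P = n\<close> nth_mem[of v P] unfolding id_list_def by auto
  also have "n \<le> n ^ C"
    using \<open>v < n\<close> assms(1) by (simp add: self_le_power)
  finally show "P ! v < n ^ C" .
qed

definition extend_id_list :: "nat \<Rightarrow> nat list \<Rightarrow> nat list" where
  "extend_id_list n xs = xs @ sorted_list_of_set ({..<n} - set xs)"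

lemma id_list_extend_id_list:
  "distinct xs \<Longrightarrow> set xs \<subseteq> {..<n} \<Longrightarrow> id_list n (extend_id_list n xs)"
  unfolding id_list_def extend_id_list_def by auto

lemma nth_extend_id_list: "i < length xs \<Longrightarrow> extend_id_list n xs ! i = xs ! i"
  unfolding extend_id_list_def by (simp add: nth_append)

lemma window_extend_id_list:
  "k + 2 * R + 1 \<le> length xs \<Longrightarrow> window R k (extend_id_list n xs) = window R k xs"
  unfolding extend_id_list_def using window_take_drop[of k R "length xs" 0 "xs @ _"] by simp

text \<open>The window \<open>w\<close> lists the identifiers at signed distances \<open>-R, \<dots>, R\<close> from a vertex.\<close>
definition centre_selects_succ :: "local_alg \<Rightarrow> nat \<Rightarrow> nat list \<Rightarrow> bool" where
  "centre_selects_succ A R w \<longleftrightarrow> 0 \<in> alg_out A (ring_state A R (\<lambda>j. w ! nat (j + int R)))"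

lemma run_cycle_graph_window:
  assumes "n \<ge> 3" "length P = n" "R \<le> v" "v + R < n"
  shows "run A (cycle_graph n) ((!) P) (ring_port n) R v
    = ring_state A R (\<lambda>j. window R (v - R) P ! nat (j + int R))"
proof -
  have "ring_ids n ((!) P) v j = window R (v - R) P ! nat (j + int R)" if "\<bar>j\<bar> \<le> int R" for j
  proof -
    have "(int v + j) mod int n = int v + j"
      using that assms(3,4) by simp
    moreover have "nat (int v + j) = v - R + nat (j + int R)"
      using that assms(3) by auto
    ultimately show ?thesis
      using that assms(2-4) unfolding ring_ids_def window_def by simp
  qed
  then show ?thesis
    using run_cycle_graph[OF assms(1)] assms(3,4) by (simp cong: ring_state_cong)
qed

locale ring_solver =
  fixes \<rho> :: real and n :: nat and A :: local_alg and R :: nat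
  assumes ring: "n \<ge> 3" and rho: "\<rho> \<ge> 1"
    and solves: "\<And>P. id_list n P \<Longrightarrow> output_ok \<rho> n A (cycle_graph n) ((!) P) (ring_port n) R"
begin

lemma ring_matching_output: "id_list n P \<Longrightarrow> ring_matching_output \<rho> n A ((!) P) R"
  unfolding ring_matching_output_def using ring solves by blast

lemma out_0_iff_centre_selects_succ:
  assumes "id_list n P" "R \<le> v" "v + R < n"
  shows "0 \<in> alg_out A (run A (cycle_graph n) ((!) P) (ring_port n) R v)
    \<longleftrightarrow> centre_selects_succ A R (window R (v - R) P)"
  unfolding centre_selects_succ_def
  using run_cycle_graph_window[OF ring length_id_list[OF assms(1)] assms(2,3)] by simp

lemma no_adjacent_centre_selects_succ:
  assumes "2 * R + 2 < n"
  shows "no_adjacent_marked R (centre_selects_succ A R) {..<n}"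
  unfolding no_adjacent_marked_def
proof (intro ballI notI)
  fix xs assume xs: "xs \<in> sorted_tuples {..<n} (2 * R + 2)"
    and marked: "centre_selects_succ A R (window R 0 xs) \<and> centre_selects_succ A R (window R 1 xs)"
  define P where "P = extend_id_list n xs"
  have P: "id_list n P"
    unfolding P_def using xs unfolding sorted_tuples_def
    by (intro id_list_extend_id_list) (auto simp: strict_sorted_iff)
  interpret ring_matching_output \<rho> n A "(!) P" R
    by (rule ring_matching_output[OF P])
  have "window R 0 P = window R 0 xs" "window R 1 P = window R 1 xs"
    using xs unfolding P_def sorted_tuples_def by (simp_all add: window_extend_id_list)
  then have "0 \<in> out R" "0 \<in> out (R + 1)"
    using marked out_0_iff_centre_selects_succ[OF P, of R] out_0_iff_centre_selects_succ[OF P, of "R + 1"]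
      assms by simp_all
  moreover have "ring_succ n R = R + 1"
    using assms by simp
  ultimately show False
    using not_out_0_succ[of R] assms by simp
qed

lemma unmarked_count_le:
  assumes "id_list n P" "2 * R < n"
  shows "real (n div 2) / \<rho> \<le> real n - real (unmarked_count R (centre_selects_succ A R) P)"
proof -
  interpret ring_matching_output \<rho> n A "(!) P" R
    by (rule ring_matching_output[OF assms(1)])
  let ?U = "{k. k + 2 * R < length P \<and> \<not> centre_selects_succ A R (window R k P)}"
  have "(\<lambda>k. k + R) ` ?U \<subseteq> {v. v < n \<and> 0 \<notin> out v}"
    using out_0_iff_centre_selects_succ[OF assms(1)] length_id_list[OF assms(1)] by auto
  then have "card ((\<lambda>k. k + R) ` ?U) \<le> card {v. v < n \<and> 0 \<notin> out v}"
    by (intro card_mono) auto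
  moreover have "card ((\<lambda>k. k + R) ` ?U) = card ?U"
    by (rule card_image) (simp add: inj_on_def)
  moreover have "card {v. v < n \<and> 0 \<in> out v} + card {v. v < n \<and> 0 \<notin> out v} = n"
  proof -
    have "{v. v < n \<and> 0 \<in> out v} \<union> {v. v < n \<and> 0 \<notin> out v} = {..<n}"
      by auto
    then show ?thesis
      by (subst card_Un_disjoint[symmetric]) auto
  qed
  moreover have "real (n div 2) / \<rho> \<le> card {v. v < n \<and> 0 \<in> out v}"
    using card_out_0_ge rho by simp
  ultimately show ?thesis
    unfolding unmarked_count_def by linarith
qed

end

lemma many_unmarked_contradiction:
  fixes l r m x g h \<rho> :: real
  assumes order: "l * x \<le> (l + r) * g + l * m" and count: "h / \<rho> \<le> x - g"
    and "x - 1 \<le> 2 * h" and "8 * \<rho> * r \<le> l" and "8 * \<rho> * m \<le> x"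
    and "l > 0" "r \<ge> 0" "\<rho> \<ge> 1" "x \<ge> 3"
  shows False
proof -
  have "(l + r) * g \<le> (l + r) * (x - h / \<rho>)"
    using count assms(6,7) by (intro mult_left_mono) auto
  then have "(l + r) * (h / \<rho>) \<le> r * x + l * m"
    using order by (simp add: algebra_simps)
  then have "8 * \<rho> * ((l + r) * (h / \<rho>)) \<le> 8 * \<rho> * (r * x + l * m)"
    using assms(8) by (intro mult_left_mono) auto
  moreover have "8 * \<rho> * ((l + r) * (h / \<rho>)) = 8 * ((l + r) * h)"
    using assms(8) by simp
  ultimately have "8 * ((l + r) * h) \<le> 8 * \<rho> * (r * x + l * m)"
    by simp
  also have "\<dots> = (8 * \<rho> * r) * x + l * (8 * \<rho> * m)"
    by (simp add: algebra_simps)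
  also have "\<dots> \<le> l * x + l * x"
    using assms(4-9) by (intro add_mono mult_right_mono mult_left_mono) auto
  finally have "8 * ((l + r) * h) \<le> 2 * (l * x)"
    by simp
  moreover have "l * h \<le> (l + r) * h"
    using assms(3,7,9) by (intro mult_right_mono) auto
  ultimately have "l * (4 * h) \<le> l * x"
    by (simp add: algebra_simps)
  then have "4 * h \<le> x"
    using assms(6) by simp
  then show False
    using assms(3,9) by linarith
qed

lemma not_ring_solver:
  fixes \<rho> :: real
  assumes "L \<ge> 1" "2 * R + 2 < n" "16 * \<rho> * R \<le> L" "8 * \<rho> * (tower (L + 2 * R - 1) L + 1) \<le> n"
  shows "\<not> ring_solver \<rho> n A R"
proof
  assume "ring_solver \<rho> n A R"
  then interpret ring_solver \<rho> n A R .
  obtain P where "distinct P" "set P = {..<n}"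
    and P: "L * n \<le> (L + 2 * R) * unmarked_count R (centre_selects_succ A R) P
      + L * (tower (L + 2 * R - 1) L + 1)"
    using exists_list_many_unmarked[OF assms(1) no_adjacent_centre_selects_succ[OF assms(2)]] by auto
  then have "id_list n P"
    unfolding id_list_def by simp
  show False
  proof (rule many_unmarked_contradiction)
    have "real (L * n) \<le> real ((L + 2 * R) * unmarked_count R (centre_selects_succ A R) P
      + L * (tower (L + 2 * R - 1) L + 1))"
      using P by (rule of_nat_mono)
    then show "real L * n \<le> (real L + 2 * R) * unmarked_count R (centre_selects_succ A R) P
      + real L * (tower (L + 2 * R - 1) L + 1)"
      by (simp add: algebra_simps)
    show "real (n div 2) / \<rho> \<le> n - real (unmarked_count R (centre_selects_succ A R) P)"
      using unmarked_count_le[OF \<open>id_list n P\<close>] assms(2) by simp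
    show "real n - 1 \<le> 2 * real (n div 2)"
      by linarith
    show "8 * \<rho> * real (2 * R) \<le> real L"
      using assms(3) by simp
  qed (use assms(1,4) ring rho in simp_all)
qed

context ring_solver
begin

lemma out_run_radius_0:
  "R = 0 \<Longrightarrow> v < n \<Longrightarrow>
    alg_out A (run A (cycle_graph n) ((!) P) (ring_port n) R v) = alg_out A (alg_init A (P ! v) 2)"
  using deg_cycle_graph[OF ring] by simp

lemma exists_id_selecting_succ_radius_0:
  assumes "R = 0"
  obtains x where "x < n" "0 \<in> alg_out A (alg_init A x 2)"
proof -
  define P where "P = extend_id_list n []"
  have P: "id_list n P"
    unfolding P_def by (rule id_list_extend_id_list) auto
  interpret ring_matching_output \<rho> n A "(!) P" R
    by (rule ring_matching_output[OF P])
  have "0 < real (n div 2) / \<rho>"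
    using ring rho by simp
  also have "\<dots> \<le> card {v. v < n \<and> 0 \<in> out v}"
    using card_out_0_ge rho by simp
  finally have "{v. v < n \<and> 0 \<in> out v} \<noteq> {}"
    by (metis card.empty of_nat_0 less_irrefl)
  then obtain v where "v < n" "0 \<in> alg_out A (alg_init A (P ! v) 2)"
    using out_run_radius_0[OF assms] by auto
  moreover have "P ! v < n"
    using P \<open>v < n\<close> nth_mem[of v P] length_id_list[OF P] unfolding id_list_def by auto
  ultimately show thesis
    using that by blast
qed

lemma id_selecting_pred_radius_0:
  assumes "R = 0" "x < n" "0 \<in> alg_out A (alg_init A x 2)" "w < n" "w \<noteq> x"
  shows "1 \<in> alg_out A (alg_init A w 2)"
proof -
  define P where "P = extend_id_list n [x, w]"
  have P: "id_list n P"
    unfolding P_def using assms by (intro id_list_extend_id_list) auto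
  interpret ring_matching_output \<rho> n A "(!) P" R
    by (rule ring_matching_output[OF P])
  show ?thesis
    using out_0_iff_succ_out_1[of 0] out_run_radius_0[OF assms(1), of 0 P]
      out_run_radius_0[OF assms(1), of 1 P] assms(3) ring
    unfolding P_def by (simp add: nth_extend_id_list)
qed

end

text \<open>Without communication the output is a function of the own identifier. Some identifier
  \<open>x\<close> selects its successor edge, every other identifier then selects its predecessor edge,
  and the ring \<open>x, z, w, \<dots>\<close> has two adjacent successor edges.\<close>
lemma not_ring_solver_0: "\<not> ring_solver \<rho> n A 0"
proof
  assume "ring_solver \<rho> n A 0"
  then interpret ring_solver \<rho> n A 0 .
  obtain x where x: "x < n" "0 \<in> alg_out A (alg_init A x 2)"
    using exists_id_selecting_succ_radius_0 by blast
  define z :: nat where "z = (if x = 0 then 1 else 0)"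
  define w :: nat where "w = (if x = 2 then 1 else 2)"
  have zw: "z < n" "w < n" "x \<noteq> z" "x \<noteq> w" "z \<noteq> w"
    unfolding z_def w_def using ring by auto
  have w: "1 \<in> alg_out A (alg_init A w 2)"
    using id_selecting_pred_radius_0[OF refl x] zw by simp
  define P where "P = extend_id_list n [x, z, w]"
  have P: "id_list n P"
    unfolding P_def using zw x by (intro id_list_extend_id_list) auto
  interpret ring_matching_output \<rho> n A "(!) P" 0
    by (rule ring_matching_output[OF P])
  have "0 \<in> out 0" "0 \<in> out 1"
    using out_0_iff_succ_out_1[of 1] x w ring
    unfolding P_def by (simp_all add: nth_extend_id_list deg_cycle_graph[OF ring])
  then show False
    using not_out_0_succ[of 0] ring by simp
qed

lemma exists_id_list_unsolved:
  fixes \<rho> :: real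
  assumes "n \<ge> 3" "\<rho> \<ge> 1" "1000 * \<rho> * R < log_star n"
  shows "\<exists>P. id_list n P \<and> \<not> output_ok \<rho> n A (cycle_graph n) ((!) P) (ring_port n) R"
proof (rule ccontr)
  assume "\<nexists>P. id_list n P \<and> \<not> output_ok \<rho> n A (cycle_graph n) ((!) P) (ring_port n) R"
  then have "ring_solver \<rho> n A R"
    using assms by unfold_locales auto
  moreover have "\<not> ring_solver \<rho> n A R"
  proof (cases "R = 0")
    case True
    then show ?thesis using not_ring_solver_0 by simp
  next
    case False
    then obtain L where "L \<ge> 1" "2 * R + 2 < n" "16 * \<rho> * R \<le> L"
      "8 * \<rho> * (tower (L + 2 * R - 1) L + 1) \<le> n"
      using parameters_for_radius[of R \<rho> n] assms(2,3) by auto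
    then show ?thesis by (rule not_ring_solver)
  qed
  ultimately show False by contradiction
qed

lemma exists_id_list_slow:
  fixes \<rho> :: real
  assumes "\<rho> \<ge> 1" "n \<ge> 3"
  obtains P where "id_list n P"
    "\<And>r. solved_by \<rho> n A (cycle_graph n) ((!) P) (ring_port n) r \<Longrightarrow> real r \<ge> log_star n / (1000 * \<rho>)"
proof (cases "log_star n > 0")
  case True
  define b where "b = log_star n / (1000 * \<rho>)"
  define R where "R = nat \<lceil>b\<rceil> - 1"
  have "b > 0"
    unfolding b_def using True assms(1) by simp
  then have "1 \<le> \<lceil>b\<rceil>"
    by simp
  then have "int R = \<lceil>b\<rceil> - 1"
    unfolding R_def by linarith
  then have "real R < b"
    using ceiling_correct[of b] by linarith
  then have "1000 * \<rho> * R < log_star n"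
    using assms(1) unfolding b_def by (simp add: field_simps)
  then obtain P where P: "id_list n P" "\<not> output_ok \<rho> n A (cycle_graph n) ((!) P) (ring_port n) R"
    using exists_id_list_unsolved[OF assms(2,1)] by blast
  have "real r \<ge> b" if "solved_by \<rho> n A (cycle_graph n) ((!) P) (ring_port n) r" for r
  proof (rule ccontr)
    assume "\<not> real r \<ge> b"
    then have "r \<le> R"
      unfolding R_def by (simp add: less_ceiling_iff) linarith
    then show False
      using that P(2) unfolding solved_by_def by blast
  qed
  then show thesis
    using that P(1) unfolding b_def by blast
next
  case False
  then show thesis
    using that id_list_extend_id_list[of "[]" n] by simp
qed

lemma ring_rounds_lower_bound:
  fixes \<rho> :: real
  assumes "C \<ge> 1" "\<rho> \<ge> 1" "n \<ge> 3"
  shows "\<exists>idf port. valid_ids C n idf \<and> valid_ports n (cycle_graph n) port \<and>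
    (\<forall>r. solved_by \<rho> n A (cycle_graph n) idf port r \<longrightarrow> real r \<ge> log_star n / (1000 * \<rho>))"
proof -
  obtain P where "id_list n P"
    "\<And>r. solved_by \<rho> n A (cycle_graph n) ((!) P) (ring_port n) r \<Longrightarrow> real r \<ge> log_star n / (1000 * \<rho>)"
    using exists_id_list_slow[OF assms(2,3)] by blast
  then show ?thesis
    using valid_ids_id_list[OF assms(1)] valid_ports_ring_port[OF assms(3)] by blast
qed

theorem theorem7p2:
  fixes C :: nat
  assumes "C \<ge> 1"
  shows "\<exists>c::real. c > 0 \<and> (\<exists>N::nat. \<forall>\<rho>::real. \<forall>n::nat. \<forall>A::local_alg.
     \<rho> \<ge> 1 \<and> n \<ge> N \<and>
     (\<forall>E idf port. simple_graph n E \<and> max_degree_le n E 2 \<and> valid_ids C n idf \<and>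
          valid_ports n E port \<longrightarrow> (\<exists>r. solved_by \<rho> n A E idf port r))
     \<longrightarrow> (\<exists>idf port. valid_ids C n idf \<and> valid_ports n (cycle_graph n) port \<and>
          (\<forall>r. solved_by \<rho> n A (cycle_graph n) idf port r \<longrightarrow>
                real r \<ge> c * real (log_star n) / \<rho>)))"
  using ring_rounds_lower_bound[OF assms] by (intro exI[of _ "1 / 1000"] conjI exI[of _ 3]) auto

end
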